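(* Consider the following two-player game between a random player $\mathfrak{R}$ and a deterministic player $\mathfrak{D}$. Initially there is a pile of $n \geq 1$ elements. The players alternate turns, with $\mathfrak{R}$ moving first. On each turn of $\mathfrak{R}$, if the pile currently contains exactly $m$ elements, $\mathfrak{R}$ removes $k$ elements, where $k$ is chosen uniformly at random from $\{1, \ldots, m\}$, independently of all previous choices. On each turn of $\mathfrak{D}$, $\mathfrak{D}$ removes exactly one element. The player who removes the last element (so that the pile is empty at the end of its turn) wins. Let $D_n$ denote the probability that $\mathfrak{D}$ wins when the game starts with $n$ elements. Then for every $n \geq 1$, $$D_n = \sum_{k=0}^{n}\frac{(-1)^k}{k!} = \frac{d_n}{n!},$$ where $d_n$ is the number of derangements (fixed-point-free permutations) of an $n$-element set. In particular, $\lim_{n\to\infty} D_n = e^{-1}$. *)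

theory Defs
  imports "HOL-Analysis.Analysis" "HOL-Probability.Probability"
begin

text \<open>The result is a distribution on booleans: True means that the deterministic
  player D wins.\<close>

fun game :: "nat \<Rightarrow> bool pmf" where
  "game 0 = return_pmf False"
| "game (Suc m) =
     pmf_of_set {1..Suc m} \<bind>
       (\<lambda>k. if k = Suc m then return_pmf False
            else if Suc m - k = 1 then return_pmf True
            else game (Suc m - k - 1))"

definition D_win :: "nat \<Rightarrow> real" where
  "D_win n = pmf (game n) True"

definition derangements :: "nat \<Rightarrow> nat" where
  "derangements n = card {p. p permutes {1..n} \<and> (\<forall>x\<in>{1..n}. p x \<noteq> x)}"

end

theory Submission
  imports Defs
begin

text \<open>If D_j denotes the winning probability of D from a pile of j elements at R's turn,
  with D_0 = 1 (D has just emptied the pile), then conditioning on R's first draw gives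
  (m + 1) D_(m+1) = D_0 + ... + D_(m-1), since R leaves m + 1 - k elements and D
  removes one more.  The partial sums of the series of e^(-1) satisfy the same
  recurrence with the same initial value.  The identification with d_n / n! is
  inclusion-exclusion over the sets of points a permutation is forced to fix.\<close>

lemma card_permutes_fixing:
  assumes "finite A" "B \<subseteq> A"
  shows "card {p. p permutes A \<and> (\<forall>x\<in>B. p x = x)} = fact (card A - card B)"
proof -
  have "{p. p permutes A \<and> (\<forall>x\<in>B. p x = x)} = {p. p permutes (A - B)}"
    by (auto simp: permutes_def)
  then show ?thesis
    using assms by (simp add: card_permutations card_Diff_subset finite_subset)
qed

lemma card_derangements_incl_excl:
  assumes "finite A"
  shows "real (card {p. p permutes A \<and> (\<forall>x\<in>A. p x \<noteq> x)})
           = (\<Sum>B\<in>Pow A. (-1) ^ card B * fact (card A - card B))"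
proof -
  define P where "P = {p. p permutes A}"
  define fixing where "fixing x = {p. p permutes A \<and> p x = x}" for x
  define \<mu> where "\<mu> X = real (card (X \<inter> P))" for X
  have "finite P"
    unfolding P_def using assms by (rule finite_permutations)
  then have \<mu>_additive: "\<mu> (X \<union> Y) = \<mu> X + \<mu> Y" if "disjnt X Y" for X Y
    using that unfolding \<mu>_def disjnt_def
    by (simp add: Int_Un_distrib2 card_Un_disjoint disjoint_iff)
  have \<mu>_fixing: "\<mu> (\<Inter>(fixing ` B)) = fact (card A - card B)" if "B \<subseteq> A" "B \<noteq> {}" for B
  proof -
    have "\<Inter>(fixing ` B) \<inter> P = {p. p permutes A \<and> (\<forall>x\<in>B. p x = x)}"
      using that by (auto simp: fixing_def P_def)
    then show ?thesis
      using card_permutes_fixing[OF assms that(1)] by (simp add: \<mu>_def)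
  qed
  have "{p. p permutes A \<and> (\<forall>x\<in>A. p x \<noteq> x)} = P - \<Union>(fixing ` A)"
    by (auto simp: P_def fixing_def)
  moreover have "\<Union>(fixing ` A) \<subseteq> P"
    by (auto simp: P_def fixing_def)
  ultimately have "real (card {p. p permutes A \<and> (\<forall>x\<in>A. p x \<noteq> x)})
                     = real (card P) - \<mu> (\<Union>(fixing ` A))"
    using \<open>finite P\<close>
    by (simp add: \<mu>_def card_Diff_subset finite_subset card_mono Int_absorb2 of_nat_diff)
  also have "\<dots> = fact (card A)
                   + (\<Sum>B | B \<subseteq> A \<and> B \<noteq> {}. (-1) ^ card B * fact (card A - card B))"
    using assms
    by (simp add: Incl_Excl_UN[OF \<mu>_additive] \<mu>_fixing P_def card_permutations sum_negf[symmetric])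
  also have "\<dots> = (\<Sum>B\<in>Pow A. (-1) ^ card B * fact (card A - card B))"
  proof -
    have "Pow A = insert {} {B. B \<subseteq> A \<and> B \<noteq> {}}" by auto
    then show ?thesis using assms by simp
  qed
  finally show ?thesis .
qed

lemma sum_Pow_by_card:
  fixes h :: "nat \<Rightarrow> 'a::comm_semiring_1"
  assumes "finite A"
  shows "(\<Sum>B\<in>Pow A. h (card B)) = (\<Sum>k=0..card A. of_nat (card A choose k) * h k)"
proof -
  have "(\<Sum>B\<in>Pow A. h (card B)) = (\<Sum>k=0..card A. \<Sum>B | B \<in> Pow A \<and> card B = k. h (card B))"
    by (rule sum.group[symmetric]) (use assms card_mono in auto)
  also have "\<dots> = (\<Sum>k=0..card A. of_nat (card A choose k) * h k)"
    using n_subsets[OF assms] by (simp add: Pow_def)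
  finally show ?thesis .
qed

lemma derangements_over_fact: "real (derangements n) / fact n = (\<Sum>k=0..n. (-1) ^ k / fact k)"
proof -
  have "real (derangements n) = (\<Sum>k=0..n. real (n choose k) * ((-1) ^ k * fact (n - k)))"
    using card_derangements_incl_excl[of "{1..n}"] sum_Pow_by_card[of "{1..n}"]
    by (simp add: derangements_def)
  also have "\<dots> = (\<Sum>k=0..n. fact n * ((-1) ^ k / fact k))"
  proof (rule sum.cong[OF refl])
    fix k assume "k \<in> {0..n}"
    then show "real (n choose k) * ((-1) ^ k * fact (n - k)) = fact n * ((-1) ^ k / fact k)"
      by (simp add: binomial_fact field_simps)
  qed
  also have "\<dots> = fact n * (\<Sum>k=0..n. (-1) ^ k / fact k)"
    by (rule sum_distrib_left[symmetric])
  finally show ?thesis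
    by simp
qed

text \<open>D's winning probability once D has moved and j elements remain; for j = 0
  D has taken the last element and won, whereas D_win 0 = 0.\<close>
definition D_win_after_D_move :: "nat \<Rightarrow> real" where
  "D_win_after_D_move j = (if j = 0 then 1 else D_win j)"

lemma D_win_Suc: "D_win (Suc m) = (\<Sum>j<m. D_win_after_D_move j) / real (Suc m)"
proof -
  have "D_win (Suc m)
          = (\<Sum>k\<in>{1..Suc m}. if k = Suc m then 0 else D_win_after_D_move (m - k)) / real (Suc m)"
    unfolding D_win_def
    by (auto simp: pmf_bind_pmf_of_set D_win_after_D_move_def D_win_def Suc_diff_le
             intro!: sum.cong)
  also have "(\<Sum>k\<in>{1..Suc m}. if k = Suc m then 0 else D_win_after_D_move (m - k))
               = (\<Sum>k\<in>{1..m}. D_win_after_D_move (m - k))"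
    by (simp add: sum.atLeast1_atMost_eq sum.atLeast_Suc_atMost)
  also have "\<dots> = (\<Sum>j<m. D_win_after_D_move j)"
    by (rule sum.reindex_bij_witness[where i="\<lambda>j. m - j" and j="\<lambda>k. m - k"]) auto
  finally show ?thesis .
qed

definition exp_neg1_partial :: "nat \<Rightarrow> real" where
  "exp_neg1_partial n = (\<Sum>k=0..n. (-1) ^ k / fact k)"

lemma exp_neg1_partial_Suc:
  "exp_neg1_partial (Suc n) = exp_neg1_partial n + (-1) ^ Suc n / fact (Suc n)"
  by (simp add: exp_neg1_partial_def)

lemma exp_neg1_partial_recurrence:
  "real (Suc m) * exp_neg1_partial (Suc m) = (\<Sum>j<m. exp_neg1_partial j)"
proof (induction m)
  case 0
  then show ?case by (simp add: exp_neg1_partial_def)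
next
  case (Suc m)
  have "real (Suc (Suc m)) * ((-1) ^ Suc (Suc m) / fact (Suc (Suc m))) = (-1) ^ m / fact (Suc m)"
    by (simp add: fact_Suc[of "Suc m"] del: fact_Suc)
  then have "real (Suc (Suc m)) * exp_neg1_partial (Suc (Suc m))
               = real (Suc m) * exp_neg1_partial (Suc m) + exp_neg1_partial (Suc m)
                 + (-1) ^ m / fact (Suc m)"
    by (simp add: exp_neg1_partial_Suc[of "Suc m"] algebra_simps del: fact_Suc)
  also have "\<dots> = (\<Sum>j<Suc m. exp_neg1_partial j)"
    using Suc.IH by (simp add: exp_neg1_partial_Suc)
  finally show ?case .
qed

lemma D_win_after_D_move_eq: "D_win_after_D_move n = exp_neg1_partial n"
proof (induction n rule: less_induct)
  case (less n)
  show ?case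
  proof (cases n)
    case 0
    then show ?thesis by (simp add: D_win_after_D_move_def exp_neg1_partial_def)
  next
    case (Suc m)
    then have "D_win_after_D_move n = (\<Sum>j<m. exp_neg1_partial j) / real (Suc m)"
      using less by (simp add: D_win_after_D_move_def D_win_Suc)
    also have "\<dots> = exp_neg1_partial n"
      using exp_neg1_partial_recurrence[of m] Suc by (simp add: field_simps)
    finally show ?thesis .
  qed
qed

lemma exp_neg1_partial_tendsto: "exp_neg1_partial \<longlonglongrightarrow> exp (-1)"
proof -
  have "(\<lambda>k. (-1::real) ^ k / fact k) sums exp (-1)"
    using exp_converges[of "-1::real"] by (simp add: field_simps)
  then have "(\<lambda>n. \<Sum>k<Suc n. (-1::real) ^ k / fact k) \<longlonglongrightarrow> exp (-1)"
    unfolding sums_def by (rule LIMSEQ_Suc)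
  then show ?thesis
    by (simp add: exp_neg1_partial_def[abs_def] atLeast0AtMost lessThan_Suc_atMost)
qed

theorem mainTheorem1:
  shows "(\<forall>n\<ge>1. D_win n = (\<Sum>k=0..n. (-1) ^ k / fact k)
                 \<and> (\<Sum>k=0..n. (-1) ^ k / fact k) = real (derangements n) / fact n)
         \<and> D_win \<longlonglongrightarrow> exp (-1)"
proof -
  have D_win_eq: "D_win n = exp_neg1_partial n" if "n \<ge> 1" for n
    using D_win_after_D_move_eq[of n] that by (simp add: D_win_after_D_move_def)
  have "D_win \<longlonglongrightarrow> exp (-1)"
    using exp_neg1_partial_tendsto
    by (rule Lim_transform_eventually) (use D_win_eq in \<open>force simp: eventually_sequentially\<close>)
  then show ?thesis
    using D_win_eq derangements_over_fact by (simp add: exp_neg1_partial_def)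
qed

end
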